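(* Let $\mathbb{B}$ be a bouquet that has a certificate of pseudo-orientability. Then every bouquet that is a partial dual of $\mathbb{B}$ also has a certificate of pseudo-orientability.
   Context: A ribbon graph is a surface with boundary written as a union of vertex discs and edge discs meeting in disjoint line segments, each on the boundary of exactly one vertex and one edge, each edge containing exactly two such segments (its ends). A bouquet is a ribbon graph with one vertex $v$; its edges are loops; a loop $e$ is orientable if $v\cup e$ is an annulus, non-orientable if it is a Möbius band. A certificate of pseudo-orientability of a bouquet is a pair $(S_1,S_2)$ of closed arcs covering the boundary circle of $v$ and meeting in exactly two points, such that both ends of each orientable loop lie in the interior of one $S_i$ and each non-orientable loop has one end in the interior of $S_1$ and the other in the interior of $S_2$. For $X\subseteq E(\mathbb{B})$, the partial dual $\mathbb{B}^X$ has the same edges and, as vertices, discs glued along each boundary component of the spanning ribbon subgraph $(V(\mathbb{B}),X)$, the old vertex discarded. *)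

theory Defs
  imports Main
begin

text \<open>Combinatorial (graph-encoded map / flag) model of ribbon graphs.
  Each edge disc e is a rectangle with four corners (flags) (e, i, s):
  i :: bool names the end of e, s :: bool names the side of e.
  The corner involutions are fixed:
    edge_alpha flips the side (crossing the attaching segment at an end),
    edge_beta  flips the end  (running along a long side of the edge disc).
  A ribbon graph on the edge set E is given by the involution nu on the flags
  which pairs the two corners joined by an arc of a vertex boundary that
  lies between consecutive attaching segments.
  Vertices = orbits of the flags under nu and edge_alpha.\<close>

type_synonym 'e flag = "'e \<times> bool \<times> bool"

definition flags :: "'e set \<Rightarrow> 'e flag set" where
  "flags E = E \<times> UNIV \<times> UNIV"

definition edge_alpha :: "'e flag \<Rightarrow> 'e flag" where
  "edge_alpha f = (case f of (e, i, s) \<Rightarrow> (e, i, \<not> s))"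

definition edge_beta :: "'e flag \<Rightarrow> 'e flag" where
  "edge_beta f = (case f of (e, i, s) \<Rightarrow> (e, \<not> i, s))"

definition ribbon_graph :: "'e set \<Rightarrow> ('e flag \<Rightarrow> 'e flag) \<Rightarrow> bool" where
  "ribbon_graph E nu \<longleftrightarrow> finite E \<and>
     (\<forall>f \<in> flags E. nu f \<in> flags E \<and> nu (nu f) = f \<and> nu f \<noteq> f)"

definition vertex_step :: "'e set \<Rightarrow> ('e flag \<Rightarrow> 'e flag) \<Rightarrow> ('e flag \<times> 'e flag) set" where
  "vertex_step E nu = {(f, nu f) | f. f \<in> flags E} \<union> {(f, edge_alpha f) | f. f \<in> flags E}"

text \<open>A bouquet: a ribbon graph with exactly one vertex (all flags on one vertex
  boundary). The edgeless case (empty flag set) represents the single vertex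
  with no edges.\<close>
definition bouquet :: "'e set \<Rightarrow> ('e flag \<Rightarrow> 'e flag) \<Rightarrow> bool" where
  "bouquet E nu \<longleftrightarrow> ribbon_graph E nu \<and>
     (\<forall>f \<in> flags E. \<forall>g \<in> flags E. (f, g) \<in> (vertex_step E nu)\<^sup>*)"

text \<open>A loop e is orientable iff v \<union> e is orientable (an annulus), i.e. some
  orientation of the vertex boundary (a 2-colouring of the flags flipped by
  nu and edge_alpha) is compatible with the edge e (also flipped by edge_beta
  on the corners of e).\<close>
definition orientable_loop :: "'e set \<Rightarrow> ('e flag \<Rightarrow> 'e flag) \<Rightarrow> 'e \<Rightarrow> bool" where
  "orientable_loop E nu e \<longleftrightarrow>
     (\<exists>c :: 'e flag \<Rightarrow> bool.
        (\<forall>f \<in> flags E. c (nu f) \<noteq> c f \<and> c (edge_alpha f) \<noteq> c f) \<and>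
        (\<forall>i s. c (edge_beta (e, i, s)) \<noteq> c (e, i, s)))"

text \<open>The two cut points of the boundary
  circle lie in (at most two) vertex arcs {f, nu f}; h f says whether the end
  containing corner f lies in S_1 (True) or S_2 (False). The ends in S_1 form
  one cyclic block, i.e. h changes value across at most two vertex arcs.\<close>
definition certificate :: "'e set \<Rightarrow> ('e flag \<Rightarrow> 'e flag) \<Rightarrow> ('e flag \<Rightarrow> bool) \<Rightarrow> bool" where
  "certificate E nu h \<longleftrightarrow>
     (\<forall>f \<in> flags E. h (edge_alpha f) = h f) \<and>
     card {{f, nu f} | f. f \<in> flags E \<and> h f \<noteq> h (nu f)} \<le> 2 \<and>
     (\<forall>e \<in> E. orientable_loop E nu e \<longrightarrow> h (e, False, False) = h (e, True, False)) \<and>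
     (\<forall>e \<in> E. \<not> orientable_loop E nu e \<longrightarrow> h (e, False, False) \<noteq> h (e, True, False))"

definition pseudo_orientable :: "'e set \<Rightarrow> ('e flag \<Rightarrow> 'e flag) \<Rightarrow> bool" where
  "pseudo_orientable E nu \<longleftrightarrow> (\<exists>h. certificate E nu h)"

text \<open>Partial duality w.r.t. X: on edges of X the roles of end and side are
  exchanged (the new vertex boundaries are the boundary components of (V,X)).\<close>
definition swap_on :: "'e set \<Rightarrow> 'e flag \<Rightarrow> 'e flag" where
  "swap_on X f = (case f of (e, i, s) \<Rightarrow> if e \<in> X then (e, s, i) else (e, i, s))"

definition partial_dual :: "'e set \<Rightarrow> ('e flag \<Rightarrow> 'e flag) \<Rightarrow> ('e flag \<Rightarrow> 'e flag)" where
  "partial_dual X nu = swap_on X \<circ> nu \<circ> swap_on X"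

end

theory Submission
  imports Defs
begin

(* Fix a vertex orientation c, a 2-colouring of the flags that flips at every step along the
   vertex boundary. On a bouquet it exists, because following the boundary one never comes back
   to a corner with the opposite orientation (alpha and nu have no fixed points), and it is
   unique up to complement, so a loop is orientable iff c differs at its two ends.
   For a certificate h, the pointwise difference d = (c \<noteq> h) is then an orientation of every
   edge disc (it flips under alpha and beta), and d fails to alternate exactly on the vertex arcs
   where h switches between S_1 and S_2; conversely every such d yields a certificate.
   Partial duality exchanges alpha and beta on the edges of X, so d transported along this
   exchange is an edge orientation of the partial dual whose discordant arcs are the images of
   the old ones: there are still at most two. *)

lemma edge_alpha_apply [simp]: "edge_alpha (e, i, s) = (e, i, \<not> s)"
  by (simp add: edge_alpha_def)

lemma edge_beta_apply [simp]: "edge_beta (e, i, s) = (e, \<not> i, s)"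
  by (simp add: edge_beta_def)

lemma mem_flags_iff [simp]: "(e, i, s) \<in> flags E \<longleftrightarrow> e \<in> E"
  by (simp add: flags_def)

lemma edge_alpha_in_flags_iff [simp]: "edge_alpha f \<in> flags E \<longleftrightarrow> f \<in> flags E"
  by (cases f) simp

lemma edge_alpha_edge_alpha [simp]: "edge_alpha (edge_alpha f) = f"
  by (cases f) simp

lemma edge_alpha_neq [simp]: "edge_alpha f \<noteq> f"
  by (cases f) simp

lemma ribbon_graph_nu:
  assumes "ribbon_graph E nu" and "f \<in> flags E"
  shows "nu f \<in> flags E" and "nu (nu f) = f" and "nu f \<noteq> f"
  using assms unfolding ribbon_graph_def by auto

(* One step along the vertex boundary: across the attaching segment at the end of f, then along
   the following vertex arc. *)
definition rotation :: "('e flag \<Rightarrow> 'e flag) \<Rightarrow> 'e flag \<Rightarrow> 'e flag" where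
  "rotation nu f = nu (edge_alpha f)"

lemma bij_betw_rotation:
  assumes "ribbon_graph E nu"
  shows "bij_betw (rotation nu) (flags E) (flags E)"
proof (rule bij_betw_imageI)
  show "inj_on (rotation nu) (flags E)"
    by (rule inj_onI)
      (metis assms edge_alpha_edge_alpha edge_alpha_in_flags_iff ribbon_graph_nu(2) rotation_def)
  show "rotation nu ` flags E = flags E"
  proof
    show "rotation nu ` flags E \<subseteq> flags E"
      using ribbon_graph_nu(1)[OF assms] by (auto simp: rotation_def)
    show "flags E \<subseteq> rotation nu ` flags E"
    proof
      fix g assume g: "g \<in> flags E"
      then have "g = rotation nu (edge_alpha (nu g))" and "edge_alpha (nu g) \<in> flags E"
        using ribbon_graph_nu[OF assms g] by (simp_all add: rotation_def)
      then show "g \<in> rotation nu ` flags E" by blast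
    qed
  qed
qed

lemma funpow_rotation_in_flags:
  assumes "ribbon_graph E nu" and "f \<in> flags E"
  shows "(rotation nu ^^ n) f \<in> flags E"
  using bij_betw_funpow[OF bij_betw_rotation[OF assms(1)]] assms(2) by (rule bij_betw_apply)

lemma funpow_rotation_cancel:
  assumes "ribbon_graph E nu" and "(rotation nu ^^ n) f = (rotation nu ^^ n) g"
    and "f \<in> flags E" and "g \<in> flags E"
  shows "f = g"
  using bij_betw_imp_inj_on[OF bij_betw_funpow[OF bij_betw_rotation[OF assms(1)]]] assms(2-4)
  by (rule inj_onD)

lemma rotation_cancel:
  assumes "ribbon_graph E nu" and "rotation nu f = rotation nu g"
    and "f \<in> flags E" and "g \<in> flags E"
  shows "f = g"
  using bij_betw_imp_inj_on[OF bij_betw_rotation[OF assms(1)]] assms(2-4)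
  by (rule inj_onD)

lemma rotation_alpha_rotation:
  assumes "ribbon_graph E nu" and "f \<in> flags E"
  shows "rotation nu (edge_alpha (rotation nu f)) = edge_alpha f"
  using ribbon_graph_nu(2)[OF assms(1)] assms(2) by (simp add: rotation_def)

lemma funpow_rotation_neq_alpha:
  assumes rg: "ribbon_graph E nu"
  shows "g \<in> flags E \<Longrightarrow> (rotation nu ^^ k) g \<noteq> edge_alpha g"
proof (induction k arbitrary: g rule: nat_induct2)
  case 0
  then show ?case by (metis edge_alpha_neq funpow_0)
next
  case 1
  then show ?case using ribbon_graph_nu(3)[OF rg, of "edge_alpha g"] by (simp add: rotation_def)
next
  case (step k)
  let ?r = "rotation nu"
  have rotated_g: "?r g \<in> flags E"
    using funpow_rotation_in_flags[OF rg step.prems, of 1] by simp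
  show ?case
  proof
    assume "(?r ^^ (k + 2)) g = edge_alpha g"
    then have "?r ((?r ^^ Suc k) g) = ?r (edge_alpha (?r g))"
      using rotation_alpha_rotation[OF rg step.prems] by simp
    then have "(?r ^^ Suc k) g = edge_alpha (?r g)"
      using funpow_rotation_in_flags[OF rg step.prems, of "Suc k"] rotated_g
      by (elim rotation_cancel[OF rg]) simp_all
    then have "(?r ^^ k) (?r g) = edge_alpha (?r g)"
      by (simp add: funpow_swap1)
    then show False using step.IH[OF rotated_g] by contradiction
  qed
qed

definition rotation_related :: "('e flag \<Rightarrow> 'e flag) \<Rightarrow> 'e flag \<Rightarrow> 'e flag \<Rightarrow> bool" where
  "rotation_related nu f g \<longleftrightarrow> (\<exists>a b. (rotation nu ^^ a) f = (rotation nu ^^ b) g)"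

lemma rotation_related_refl: "rotation_related nu f f"
  unfolding rotation_related_def by blast

lemma rotation_related_sym: "rotation_related nu f g \<Longrightarrow> rotation_related nu g f"
  unfolding rotation_related_def by metis

lemma rotation_related_trans:
  assumes "rotation_related nu f g" and "rotation_related nu g h"
  shows "rotation_related nu f h"
proof -
  let ?r = "rotation nu"
  obtain a b where ab: "(?r ^^ a) f = (?r ^^ b) g" using assms(1) unfolding rotation_related_def by blast
  obtain c d where cd: "(?r ^^ c) g = (?r ^^ d) h" using assms(2) unfolding rotation_related_def by blast
  have "(?r ^^ (c + a)) f = (?r ^^ (c + b)) g"
    by (simp add: funpow_add ab)
  also have "\<dots> = (?r ^^ b) ((?r ^^ c) g)"
    by (simp only: add.commute[of c b] funpow_add comp_apply)
  also have "\<dots> = (?r ^^ (b + d)) h"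
    by (simp add: funpow_add cd)
  finally have "(?r ^^ (c + a)) f = (?r ^^ (b + d)) h" .
  then show ?thesis unfolding rotation_related_def by blast
qed

lemma rotation_related_rotation_iff:
  "rotation_related nu f (rotation nu g) \<longleftrightarrow> rotation_related nu f g"
  unfolding rotation_related_def by (metis funpow.simps(2) funpow_Suc_right comp_apply)

lemma not_rotation_related_alpha:
  assumes rg: "ribbon_graph E nu" and g: "g \<in> flags E"
  shows "\<not> rotation_related nu g (edge_alpha g)"
proof
  let ?r = "rotation nu"
  assume "rotation_related nu g (edge_alpha g)"
  then obtain a b where ab: "(?r ^^ a) g = (?r ^^ b) (edge_alpha g)"
    unfolding rotation_related_def by blast
  show False
  proof (cases "b \<le> a")
    case True
    then have "?r ^^ a = ?r ^^ b \<circ> ?r ^^ (a - b)"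
      by (simp add: funpow_add[symmetric])
    then have "(?r ^^ b) ((?r ^^ (a - b)) g) = (?r ^^ b) (edge_alpha g)"
      using ab by simp
    then have "(?r ^^ (a - b)) g = edge_alpha g"
      by (rule funpow_rotation_cancel[OF rg]) (simp_all add: g funpow_rotation_in_flags[OF rg])
    then show False using funpow_rotation_neq_alpha[OF rg g] by contradiction
  next
    case False
    then have "?r ^^ b = ?r ^^ a \<circ> ?r ^^ (b - a)"
      by (simp add: funpow_add[symmetric])
    then have "(?r ^^ a) g = (?r ^^ a) ((?r ^^ (b - a)) (edge_alpha g))"
      using ab by simp
    then have "g = (?r ^^ (b - a)) (edge_alpha g)"
      by (rule funpow_rotation_cancel[OF rg]) (simp_all add: g funpow_rotation_in_flags[OF rg])
    then have "(?r ^^ (b - a)) (edge_alpha g) = edge_alpha (edge_alpha g)" by simp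
    moreover have "edge_alpha g \<in> flags E" using g by simp
    ultimately show False using funpow_rotation_neq_alpha[OF rg] by blast
  qed
qed

definition vertex_orientation :: "'e set \<Rightarrow> ('e flag \<Rightarrow> 'e flag) \<Rightarrow> ('e flag \<Rightarrow> bool) \<Rightarrow> bool" where
  "vertex_orientation E nu c \<longleftrightarrow> (\<forall>f \<in> flags E. c (nu f) \<noteq> c f \<and> c (edge_alpha f) \<noteq> c f)"

lemma vertex_step_rotation_related:
  assumes rg: "ribbon_graph E nu" and "(f, g) \<in> (vertex_step E nu)\<^sup>*"
  shows "rotation_related nu f g \<or> rotation_related nu f (edge_alpha g)"
  using assms(2)
proof (induction rule: rtrancl_induct)
  case base
  then show ?case by (simp add: rotation_related_refl)
next
  case (step y z)
  then have y: "y \<in> flags E" and "z = nu y \<or> z = edge_alpha y"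
    unfolding vertex_step_def by auto
  then consider "z = nu y" | "z = edge_alpha y" by blast
  then show ?case
  proof cases
    case 1
    then have z_eq: "z = rotation nu (edge_alpha y)" and y_eq: "y = rotation nu (edge_alpha z)"
      using ribbon_graph_nu(2)[OF rg y] by (simp_all add: rotation_def)
    have "rotation_related nu f z \<longleftrightarrow> rotation_related nu f (edge_alpha y)"
      by (subst z_eq) (rule rotation_related_rotation_iff)
    moreover have "rotation_related nu f (edge_alpha z) \<longleftrightarrow> rotation_related nu f y"
      by (subst y_eq) (rule rotation_related_rotation_iff[symmetric])
    ultimately show ?thesis using step.IH by blast
  next
    case 2
    then show ?thesis using step.IH by auto
  qed
qed

lemma bouquet_vertex_orientation:
  assumes b: "bouquet E nu"
  obtains c where "vertex_orientation E nu c"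
proof (cases "flags E = {}")
  case True
  then show ?thesis using that unfolding vertex_orientation_def by blast
next
  case False
  then obtain f0 where f0: "f0 \<in> flags E" by blast
  have rg: "ribbon_graph E nu" using b unfolding bouquet_def by simp
  have alpha: "rotation_related nu f0 (edge_alpha g) \<noteq> rotation_related nu f0 g"
    if g: "g \<in> flags E" for g
  proof -
    have "(f0, g) \<in> (vertex_step E nu)\<^sup>*"
      using b f0 g unfolding bouquet_def by blast
    then have "rotation_related nu f0 g \<or> rotation_related nu f0 (edge_alpha g)"
      by (rule vertex_step_rotation_related[OF rg])
    moreover have "\<not> (rotation_related nu f0 g \<and> rotation_related nu f0 (edge_alpha g))"
      using not_rotation_related_alpha[OF rg g] rotation_related_sym rotation_related_trans by blast
    ultimately show ?thesis by blast
  qed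
  have "vertex_orientation E nu (rotation_related nu f0)"
    unfolding vertex_orientation_def
  proof (intro ballI conjI)
    fix g assume g: "g \<in> flags E"
    then show "rotation_related nu f0 (edge_alpha g) \<noteq> rotation_related nu f0 g"
      by (rule alpha)
    have "nu g = rotation nu (edge_alpha g)" by (simp add: rotation_def)
    then show "rotation_related nu f0 (nu g) \<noteq> rotation_related nu f0 g"
      using alpha[OF g] by (simp add: rotation_related_rotation_iff)
  qed
  then show ?thesis by (rule that)
qed

lemma vertex_orientations_agree:
  assumes b: "bouquet E nu"
    and c1: "vertex_orientation E nu c1" and c2: "vertex_orientation E nu c2"
    and f: "f \<in> flags E" and g: "g \<in> flags E"
  shows "c1 f = c1 g \<longleftrightarrow> c2 f = c2 g"
proof -
  have "(f, g) \<in> (vertex_step E nu)\<^sup>*"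
    using b f g unfolding bouquet_def by blast
  then have "c1 f = c2 f \<longleftrightarrow> c1 g = c2 g"
  proof (induction rule: rtrancl_induct)
    case base
    then show ?case by simp
  next
    case (step y z)
    then have "y \<in> flags E" and "z = nu y \<or> z = edge_alpha y"
      unfolding vertex_step_def by auto
    then have "c1 z = (\<not> c1 y)" and "c2 z = (\<not> c2 y)"
      using c1 c2 unfolding vertex_orientation_def by blast+
    then show ?case using step.IH by simp
  qed
  then show ?thesis by blast
qed

lemma edge_beta_flip_iff:
  fixes d :: "'e flag \<Rightarrow> bool"
  assumes alpha: "\<forall>f \<in> flags E. d (edge_alpha f) \<noteq> d f" and e: "e \<in> E"
  shows "(\<forall>i s. d (edge_beta (e, i, s)) \<noteq> d (e, i, s)) \<longleftrightarrow> d (e, True, False) \<noteq> d (e, False, False)"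
proof -
  have "d (e, i, True) = (\<not> d (e, i, False))" for i
    using alpha e by (metis edge_alpha_apply mem_flags_iff)
  then show ?thesis by (auto simp: all_bool_eq)
qed

lemma orientable_loop_iff:
  assumes b: "bouquet E nu" and c: "vertex_orientation E nu c" and e: "e \<in> E"
  shows "orientable_loop E nu e \<longleftrightarrow> c (e, True, False) \<noteq> c (e, False, False)"
proof
  assume "orientable_loop E nu e"
  then obtain c' where c': "vertex_orientation E nu c'"
    and beta: "\<forall>i s. c' (edge_beta (e, i, s)) \<noteq> c' (e, i, s)"
    unfolding orientable_loop_def vertex_orientation_def by blast
  have "c' (edge_beta (e, False, False)) \<noteq> c' (e, False, False)"
    using beta by blast
  then have "c' (e, True, False) \<noteq> c' (e, False, False)" by simp
  then show "c (e, True, False) \<noteq> c (e, False, False)"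
    using vertex_orientations_agree[OF b c c'] e by simp
next
  assume ends: "c (e, True, False) \<noteq> c (e, False, False)"
  have "\<forall>f \<in> flags E. c (edge_alpha f) \<noteq> c f"
    using c unfolding vertex_orientation_def by blast
  then have "\<forall>i s. c (edge_beta (e, i, s)) \<noteq> c (e, i, s)"
    by (rule edge_beta_flip_iff[OF _ e, THEN iffD2]) (rule ends)
  then show "orientable_loop E nu e"
    using c unfolding orientable_loop_def vertex_orientation_def by (intro exI[of _ c]) blast
qed

definition edge_orientation :: "'e set \<Rightarrow> ('e flag \<Rightarrow> bool) \<Rightarrow> bool" where
  "edge_orientation E d \<longleftrightarrow>
     (\<forall>f \<in> flags E. d (edge_alpha f) \<noteq> d f \<and> d (edge_beta f) \<noteq> d f)"

definition discordant_arcs ::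
    "'e set \<Rightarrow> ('e flag \<Rightarrow> 'e flag) \<Rightarrow> ('e flag \<Rightarrow> bool) \<Rightarrow> 'e flag set set" where
  "discordant_arcs E nu d = {{f, nu f} | f. f \<in> flags E \<and> d f = d (nu f)}"

lemma edge_orientation_iff:
  "edge_orientation E d \<longleftrightarrow>
     (\<forall>f \<in> flags E. d (edge_alpha f) \<noteq> d f) \<and> (\<forall>e \<in> E. d (e, True, False) \<noteq> d (e, False, False))"
proof (cases "\<forall>f \<in> flags E. d (edge_alpha f) \<noteq> d f")
  case True
  have "(\<forall>f \<in> flags E. d (edge_beta f) \<noteq> d f) \<longleftrightarrow>
      (\<forall>e \<in> E. \<forall>i s. d (edge_beta (e, i, s)) \<noteq> d (e, i, s))"
    by (auto simp: flags_def)
  then show ?thesis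
    unfolding edge_orientation_def ball_conj_distrib using edge_beta_flip_iff[OF True] True by simp
next
  case False
  then show ?thesis unfolding edge_orientation_def by blast
qed

lemma certificate_iff_edge_orientation:
  assumes b: "bouquet E nu" and c: "vertex_orientation E nu c"
  shows "certificate E nu h \<longleftrightarrow>
    edge_orientation E (\<lambda>f. c f \<noteq> h f) \<and> card (discordant_arcs E nu (\<lambda>f. c f \<noteq> h f)) \<le> 2"
proof -
  define d where "d f = (c f \<noteq> h f)" for f
  have alpha: "(\<forall>f \<in> flags E. h (edge_alpha f) = h f) \<longleftrightarrow> (\<forall>f \<in> flags E. d (edge_alpha f) \<noteq> d f)"
    using c unfolding vertex_orientation_def d_def by auto
  have loops: "(\<forall>e \<in> E. orientable_loop E nu e \<longrightarrow> h (e, False, False) = h (e, True, False)) \<and>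
      (\<forall>e \<in> E. \<not> orientable_loop E nu e \<longrightarrow> h (e, False, False) \<noteq> h (e, True, False)) \<longleftrightarrow>
      (\<forall>e \<in> E. d (e, True, False) \<noteq> d (e, False, False))"
    using orientable_loop_iff[OF b c] unfolding d_def by auto
  have "h f \<noteq> h (nu f) \<longleftrightarrow> d f = d (nu f)" if "f \<in> flags E" for f
    using c that unfolding vertex_orientation_def d_def by auto
  then have arcs: "{{f, nu f} | f. f \<in> flags E \<and> h f \<noteq> h (nu f)} = discordant_arcs E nu d"
    unfolding discordant_arcs_def by blast
  show ?thesis
    unfolding certificate_def edge_orientation_iff d_def[symmetric] alpha loops arcs by blast
qed

lemma pseudo_orientable_iff_edge_orientation:
  assumes b: "bouquet E nu"
  shows "pseudo_orientable E nu \<longleftrightarrow>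
    (\<exists>d. edge_orientation E d \<and> card (discordant_arcs E nu d) \<le> 2)"
proof -
  obtain c where c: "vertex_orientation E nu c"
    using bouquet_vertex_orientation[OF b] by blast
  show ?thesis
  proof
    assume "pseudo_orientable E nu"
    then obtain h where "certificate E nu h"
      unfolding pseudo_orientable_def by blast
    then show "\<exists>d. edge_orientation E d \<and> card (discordant_arcs E nu d) \<le> 2"
      using certificate_iff_edge_orientation[OF b c] by blast
  next
    assume "\<exists>d. edge_orientation E d \<and> card (discordant_arcs E nu d) \<le> 2"
    then obtain d where "edge_orientation E d" and "card (discordant_arcs E nu d) \<le> 2"
      by blast
    moreover have "(\<lambda>f. c f \<noteq> (c f \<noteq> d f)) = d" by auto
    ultimately have "certificate E nu (\<lambda>f. c f \<noteq> d f)"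
      using certificate_iff_edge_orientation[OF b c] by simp
    then show "pseudo_orientable E nu"
      unfolding pseudo_orientable_def by blast
  qed
qed

lemma swap_on_swap_on [simp]: "swap_on X (swap_on X f) = f"
  by (cases f) (simp add: swap_on_def)

lemma swap_on_in_flags_iff [simp]: "swap_on X f \<in> flags E \<longleftrightarrow> f \<in> flags E"
  by (cases f) (simp add: swap_on_def)

lemma inj_swap_on: "inj (swap_on X)"
  by (rule inj_on_inverseI[where g = "swap_on X"]) simp

lemma edge_orientation_swap_on:
  assumes "edge_orientation E d"
  shows "edge_orientation E (d \<circ> swap_on X)"
  unfolding edge_orientation_def
proof
  fix f assume "f \<in> flags E"
  then obtain e i s where f: "f = (e, i, s)" and "(e, s, i) \<in> flags E" and "(e, i, s) \<in> flags E"
    by (cases f) simp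
  then show "(d \<circ> swap_on X) (edge_alpha f) \<noteq> (d \<circ> swap_on X) f \<and>
      (d \<circ> swap_on X) (edge_beta f) \<noteq> (d \<circ> swap_on X) f"
    using assms unfolding edge_orientation_def swap_on_def by force
qed

lemma discordant_arcs_partial_dual:
  "discordant_arcs E (partial_dual X nu) (d \<circ> swap_on X) =
     image (swap_on X) ` discordant_arcs E nu d"
proof (intro equalityI subsetI)
  let ?sw = "swap_on X"
  have arc: "{f, partial_dual X nu f} = ?sw ` {?sw f, nu (?sw f)}" for f
    by (simp add: partial_dual_def)
  have concordant:
    "(d \<circ> ?sw) f = (d \<circ> ?sw) (partial_dual X nu f) \<longleftrightarrow> d (?sw f) = d (nu (?sw f))" for f
    by (simp add: partial_dual_def)
  fix A
  show "A \<in> image ?sw ` discordant_arcs E nu d"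
    if A: "A \<in> discordant_arcs E (partial_dual X nu) (d \<circ> ?sw)"
  proof -
    obtain f where f: "f \<in> flags E" "d (?sw f) = d (nu (?sw f))" "A = ?sw ` {?sw f, nu (?sw f)}"
      using A unfolding discordant_arcs_def arc concordant by blast
    have "?sw f \<in> flags E" using f(1) by simp
    then have "{?sw f, nu (?sw f)} \<in> discordant_arcs E nu d"
      unfolding discordant_arcs_def using f(2) by blast
    then show ?thesis using f(3) by blast
  qed
  show "A \<in> discordant_arcs E (partial_dual X nu) (d \<circ> ?sw)"
    if A: "A \<in> image ?sw ` discordant_arcs E nu d"
  proof -
    obtain g where g: "g \<in> flags E" "d g = d (nu g)" "A = ?sw ` {g, nu g}"
      using A unfolding discordant_arcs_def by blast
    have "?sw g \<in> flags E" and "(d \<circ> ?sw) (?sw g) = (d \<circ> ?sw) (partial_dual X nu (?sw g))"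
      using g(1,2) by (simp_all only: concordant swap_on_swap_on swap_on_in_flags_iff)
    then have "{?sw g, partial_dual X nu (?sw g)} \<in> discordant_arcs E (partial_dual X nu) (d \<circ> ?sw)"
      unfolding discordant_arcs_def by blast
    then show ?thesis using g(3) arc[of "?sw g"] by simp
  qed
qed

lemma card_discordant_arcs_partial_dual:
  "card (discordant_arcs E (partial_dual X nu) (d \<circ> swap_on X)) = card (discordant_arcs E nu d)"
  unfolding discordant_arcs_partial_dual
  by (rule card_image[OF inj_on_image]) (rule inj_on_subset[OF inj_swap_on subset_UNIV])

theorem lemma3p10:
  fixes E :: "'e set" and nu :: "'e flag \<Rightarrow> 'e flag" and X :: "'e set"
  assumes "bouquet E nu"
    and "pseudo_orientable E nu"
    and "X \<subseteq> E"
    and "bouquet E (partial_dual X nu)"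
  shows "pseudo_orientable E (partial_dual X nu)"
proof -
  obtain d where "edge_orientation E d" and "card (discordant_arcs E nu d) \<le> 2"
    using assms(2) pseudo_orientable_iff_edge_orientation[OF assms(1)] by blast
  then have "edge_orientation E (d \<circ> swap_on X)"
    and "card (discordant_arcs E (partial_dual X nu) (d \<circ> swap_on X)) \<le> 2"
    by (simp_all add: edge_orientation_swap_on card_discordant_arcs_partial_dual)
  then show ?thesis
    using pseudo_orientable_iff_edge_orientation[OF assms(4)] by blast
qed

end
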